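(* With the notation of the context, writing $\mathbf 1=\mathbf 1_{\{|k_1+k_3|<|k_2|\}}$, $$\|\mathbf 1\,\mathrm T^{{\rm b},m}\|^2_{kk_1k_2k_3}\lesssim N_1N_3,\qquad \|\mathbf 1\,\mathrm T^{{\rm b},m}\|^2_{kk_2\to k_1k_3}\lesssim(N_1\wedge N_3)^{1-\frac\alpha2},$$ $$\|\mathbf 1\,\mathrm T^{{\rm b},m}\|^2_{k_1\to kk_2k_3}\lesssim N_3,\qquad \|\mathbf 1\,\mathrm T^{{\rm b},m}\|^2_{k_3\to kk_1k_2}\lesssim N_1.$$
   Context: Fix $\alpha\in(1,2)$, dyadic numbers $1\le N_1,N_2,N_3\le N$, a real number $m$ and a constant $C_0>0$. Let $S$ be the set of $(k,k_1,k_2,k_3)\in\mathbb Z^4$ with $k=k_1-k_2+k_3$, $k_2\notin\{k_1,k_3\}$, $\big||k_1|^\alpha-|k_2|^\alpha+|k_3|^\alpha-|k|^\alpha-m\big|\le C_0$, $|k|\le N$ and $|k_j|\le N_j$ for $j=1,2,3$. The base tensor is $\mathrm T^{{\rm b},m}_{kk_1k_2k_3}=\mathbf 1_S(k,k_1,k_2,k_3)$. For a tensor $H=H_{k_A}$ indexed by $k_A=(k_j)_{j\in A}\in\mathbb Z^A$ and a partition $(B,C)$ of $A$, $\|H\|_{k_B\to k_C}^2=\sup\{\sum_{k_C}|\sum_{k_B}H_{k_A}z_{k_B}|^2:\sum_{k_B}|z_{k_B}|^2=1\}$ (the $\ell^2_{k_B}\to\ell^2_{k_C}$ operator norm); $\|H\|_{k_A}$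 denotes the $\ell^2_{k_A}$ norm. $a\wedge b=\min(a,b)$. $A\lesssim B$ means $A\le CB$ with $C$ depending only on $\alpha$ and $C_0$. *)

theory Defs
  imports "HOL-Analysis.Analysis"
begin

definition dyadic :: "real \<Rightarrow> bool" where
  "dyadic x \<longleftrightarrow> (\<exists>n::nat. x = 2 ^ n)"

definition Sset :: "real \<Rightarrow> real \<Rightarrow> real \<Rightarrow> real \<Rightarrow> real \<Rightarrow> real \<Rightarrow> real \<Rightarrow> (int \<times> int \<times> int \<times> int) set" where
  "Sset \<alpha> C0 N N1 N2 N3 m = {(k, k1, k2, k3).
     k = k1 - k2 + k3 \<and> k2 \<noteq> k1 \<and> k2 \<noteq> k3 \<and>
     \<bar>real_of_int \<bar>k1\<bar> powr \<alpha> - real_of_int \<bar>k2\<bar> powr \<alpha> + real_of_int \<bar>k3\<bar> powr \<alpha>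
        - real_of_int \<bar>k\<bar> powr \<alpha> - m\<bar> \<le> C0 \<and>
     \<bar>real_of_int k\<bar> \<le> N \<and> \<bar>real_of_int k1\<bar> \<le> N1 \<and> \<bar>real_of_int k2\<bar> \<le> N2 \<and> \<bar>real_of_int k3\<bar> \<le> N3}"

definition Tb :: "real \<Rightarrow> real \<Rightarrow> real \<Rightarrow> real \<Rightarrow> real \<Rightarrow> real \<Rightarrow> real \<Rightarrow> int \<Rightarrow> int \<Rightarrow> int \<Rightarrow> int \<Rightarrow> real" where
  "Tb \<alpha> C0 N N1 N2 N3 m k k1 k2 k3 = indicator (Sset \<alpha> C0 N N1 N2 N3 m) (k, k1, k2, k3)"

definition Tcut :: "real \<Rightarrow> real \<Rightarrow> real \<Rightarrow> real \<Rightarrow> real \<Rightarrow> real \<Rightarrow> real \<Rightarrow> int \<Rightarrow> int \<Rightarrow> int \<Rightarrow> int \<Rightarrow> real" where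
  "Tcut \<alpha> C0 N N1 N2 N3 m k k1 k2 k3 =
     (if \<bar>k1 + k3\<bar> < \<bar>k2\<bar> then 1 else 0) * Tb \<alpha> C0 N N1 N2 N3 m k k1 k2 k3"

definition tnorm2 :: "('a \<Rightarrow> real) \<Rightarrow> real" where
  "tnorm2 H = (\<Sum>\<^sub>\<infinity>x. (H x)\<^sup>2)"

text \<open>Squared l^2_{k_B} -> l^2_{k_C} operator norm of a tensor reshaped as M k_B k_C
  (complex test vectors z of unit l^2 norm).\<close>
definition opnorm2 :: "('b \<Rightarrow> 'c \<Rightarrow> real) \<Rightarrow> real" where
  "opnorm2 M = Sup {(\<Sum>\<^sub>\<infinity>c. (cmod (\<Sum>\<^sub>\<infinity>b. complex_of_real (M b c) * z b))\<^sup>2) | z :: 'b \<Rightarrow> complex.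
       (\<lambda>b. (cmod (z b))\<^sup>2) summable_on UNIV \<and> (\<Sum>\<^sub>\<infinity>b. (cmod (z b))\<^sup>2) = 1}"

end

theory Submission
  imports Defs
begin

text \<open>
  All four bounds count points of the support of the 0/1 tensor: its squared \<open>\<ell>\<^sup>2\<close> norm is the
  size of the support, and by Schur's test each operator norm is at most the largest row size times
  the largest column size of the reshaped matrix.

  Given \<open>k\<^sub>1\<close> and \<open>k\<^sub>3\<close>, the cut \<open>|k\<^sub>1 + k\<^sub>3| < |k\<^sub>2|\<close> leaves only \<open>O(C\<^sub>0)\<close> admissible \<open>k\<^sub>2\<close>:
  beyond \<open>|k\<^sub>1 + k\<^sub>3|\<close> the phase \<open>|k\<^sub>1 + k\<^sub>3 - k\<^sub>2|\<^sup>\<alpha> + |k\<^sub>2|\<^sup>\<alpha>\<close> grows by at least 1 per unit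
  step of \<open>|k\<^sub>2|\<close>. This gives the first, third and fourth bounds.

  For the second bound, fixing \<open>(k, k\<^sub>2)\<close> fixes \<open>s = k\<^sub>1 + k\<^sub>3\<close> and confines \<open>j = k\<^sub>1\<close> (or \<open>k\<^sub>3\<close>)
  to a set on which \<open>g(j) = |j|\<^sup>\<alpha> + |s - j|\<^sup>\<alpha>\<close> stays within \<open>C\<^sub>0\<close> of a constant. On \<open>|j| \<le> R\<close> the
  second differences of \<open>g\<close> are \<open>\<ge> c R\<^sup>\<alpha>\<^sup>-\<^sup>2\<close>, and a convex sequence with second differences
  \<open>\<ge> \<kappa>\<close> stays within \<open>C\<^sub>0\<close> of a level on at most \<open>O(\<surd>(C\<^sub>0/\<kappa>))\<close> points, i.e. \<open>O(R\<^sup>1\<^sup>-\<^sup>\<alpha>\<^sup>/\<^sup>2)\<close>.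
\<close>

section \<open>Schur's test\<close>

lemma infsum_eq_sum_support:
  fixes f :: "'a \<Rightarrow> 'b::{comm_monoid_add, t2_space}"
  assumes "finite S" "\<And>x. x \<notin> S \<Longrightarrow> f x = 0"
  shows "infsum f UNIV = sum f S"
  using infsum_cong_neutral[of S UNIV f f] assms by simp

lemma tnorm2_eq_card_support:
  fixes H :: "'a \<Rightarrow> real"
  assumes "finite {x. H x \<noteq> 0}" "\<And>x. H x = 0 \<or> H x = 1"
  shows "tnorm2 H = card {x. H x \<noteq> 0}"
proof -
  have "tnorm2 H = (\<Sum>x\<in>{x. H x \<noteq> 0}. (H x)\<^sup>2)"
    unfolding tnorm2_def by (rule infsum_eq_sum_support) (use assms in auto)
  also have "\<dots> = (\<Sum>x\<in>{x. H x \<noteq> 0}. 1)"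
    using assms(2) by (intro sum.cong) (auto, metis one_power2)
  finally show ?thesis by simp
qed

lemma Schur_test_finite:
  fixes M :: "'b \<Rightarrow> 'c \<Rightarrow> real" and z :: "'b \<Rightarrow> complex" and R K :: real
  assumes fin: "finite B" "finite C"
    and bounded: "\<And>b c. \<bar>M b c\<bar> \<le> 1"
    and rows: "\<And>b. real (card {c\<in>C. M b c \<noteq> 0}) \<le> R"
    and cols: "\<And>c. real (card {b\<in>B. M b c \<noteq> 0}) \<le> K"
  shows "(\<Sum>c\<in>C. (cmod (\<Sum>b\<in>B. complex_of_real (M b c) * z b))\<^sup>2)
    \<le> R * K * (\<Sum>b\<in>B. (cmod (z b))\<^sup>2)"
proof -
  define col where "col c = {b\<in>B. M b c \<noteq> 0}" for c
  have K: "0 \<le> K" using cols order_trans of_nat_0_le_iff by blast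
  have column: "(cmod (\<Sum>b\<in>B. complex_of_real (M b c) * z b))\<^sup>2 \<le> K * (\<Sum>b\<in>col c. (cmod (z b))\<^sup>2)"
    for c
  proof -
    have "cmod (\<Sum>b\<in>B. complex_of_real (M b c) * z b) = cmod (\<Sum>b\<in>col c. complex_of_real (M b c) * z b)"
      unfolding col_def using fin by (intro arg_cong[where f=cmod] sum.mono_neutral_right) auto
    also have "\<dots> \<le> (\<Sum>b\<in>col c. cmod (z b))"
      by (rule order_trans[OF norm_sum sum_mono])
        (use bounded in \<open>auto simp: norm_mult intro: mult_left_le_one_le\<close>)
    finally have "(cmod (\<Sum>b\<in>B. complex_of_real (M b c) * z b))\<^sup>2 \<le> (\<Sum>b\<in>col c. cmod (z b))\<^sup>2"
      by (simp add: power_mono)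
    also have "\<dots> \<le> (\<Sum>b\<in>col c. (cmod (z b))\<^sup>2) * card (col c)"
      by (rule sum_squared_le_sum_of_squares)
    also have "\<dots> \<le> (\<Sum>b\<in>col c. (cmod (z b))\<^sup>2) * K"
      using cols unfolding col_def by (intro mult_left_mono sum_nonneg) auto
    finally show ?thesis by (simp add: mult.commute)
  qed
  \<comment> \<open>after swapping the sums, \<open>|z b|\<^sup>2\<close> is counted once per nonzero entry of row \<open>b\<close>\<close>
  have "(\<Sum>c\<in>C. (cmod (\<Sum>b\<in>B. complex_of_real (M b c) * z b))\<^sup>2)
      \<le> K * (\<Sum>c\<in>C. \<Sum>b\<in>B. if M b c \<noteq> 0 then (cmod (z b))\<^sup>2 else 0)"
    using column fin by (simp add: sum_distrib_left col_def sum.inter_filter sum_mono)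
  also have "\<dots> = K * (\<Sum>b\<in>B. (cmod (z b))\<^sup>2 * card {c\<in>C. M b c \<noteq> 0})"
    using fin by (subst sum.swap) (simp add: sum.inter_filter[symmetric] mult.commute)
  also have "\<dots> \<le> K * (\<Sum>b\<in>B. (cmod (z b))\<^sup>2 * R)"
    using K rows by (intro mult_left_mono sum_mono) auto
  finally show ?thesis by (simp add: sum_distrib_left sum_distrib_right mult_ac)
qed

lemma opnorm2_le_Schur:
  fixes M :: "'b \<Rightarrow> 'c \<Rightarrow> real" and R K :: real
  assumes fin: "finite {(b, c). M b c \<noteq> 0}"
    and bounded: "\<And>b c. \<bar>M b c\<bar> \<le> 1"
    and rows: "\<And>b. real (card {c. M b c \<noteq> 0}) \<le> R"
    and cols: "\<And>c. real (card {b. M b c \<noteq> 0}) \<le> K"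
  shows "opnorm2 M \<le> R * K"
  unfolding opnorm2_def
proof (rule cSup_least)
  define e :: "'b \<Rightarrow> complex" where "e b = (if b = undefined then 1 else 0)" for b
  have "(\<lambda>b. (cmod (e b))\<^sup>2) summable_on UNIV" "(\<Sum>\<^sub>\<infinity>b. (cmod (e b))\<^sup>2) = 1"
    using infsum_eq_sum_support[of "{undefined}" "\<lambda>b. (cmod (e b))\<^sup>2"]
      summable_on_cong_neutral[of "{undefined}" UNIV "\<lambda>b. (cmod (e b))\<^sup>2"]
    by (auto simp: e_def)
  then show "{(\<Sum>\<^sub>\<infinity>c. (cmod (\<Sum>\<^sub>\<infinity>b. complex_of_real (M b c) * z b))\<^sup>2) | z :: 'b \<Rightarrow> complex.
      (\<lambda>b. (cmod (z b))\<^sup>2) summable_on UNIV \<and> (\<Sum>\<^sub>\<infinity>b. (cmod (z b))\<^sup>2) = 1} \<noteq> {}"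
    by blast
next
  fix x
  assume "x \<in> {(\<Sum>\<^sub>\<infinity>c. (cmod (\<Sum>\<^sub>\<infinity>b. complex_of_real (M b c) * z b))\<^sup>2) | z :: 'b \<Rightarrow> complex.
      (\<lambda>b. (cmod (z b))\<^sup>2) summable_on UNIV \<and> (\<Sum>\<^sub>\<infinity>b. (cmod (z b))\<^sup>2) = 1}"
  then obtain z :: "'b \<Rightarrow> complex"
    where x: "x = (\<Sum>\<^sub>\<infinity>c. (cmod (\<Sum>\<^sub>\<infinity>b. complex_of_real (M b c) * z b))\<^sup>2)"
      and summable: "(\<lambda>b. (cmod (z b))\<^sup>2) summable_on UNIV"
      and unit: "(\<Sum>\<^sub>\<infinity>b. (cmod (z b))\<^sup>2) = 1"
    by blast
  define B where "B = fst ` {(b, c). M b c \<noteq> 0}"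
  define C where "C = snd ` {(b, c). M b c \<noteq> 0}"
  have finBC: "finite B" "finite C" using fin by (auto simp: B_def C_def)
  have outside: "M b c = 0" if "b \<notin> B \<or> c \<notin> C" for b c
    using that by (force simp: B_def C_def)
  have "x = (\<Sum>c\<in>C. (cmod (\<Sum>b\<in>B. complex_of_real (M b c) * z b))\<^sup>2)"
  proof -
    have inner: "(\<Sum>\<^sub>\<infinity>b. complex_of_real (M b c) * z b) = (\<Sum>b\<in>B. complex_of_real (M b c) * z b)"
      for c using outside by (intro infsum_eq_sum_support[OF finBC(1)]) auto
    show ?thesis
      unfolding x inner using outside by (intro infsum_eq_sum_support[OF finBC(2)]) auto
  qed
  also have "\<dots> \<le> R * K * (\<Sum>b\<in>B. (cmod (z b))\<^sup>2)"
  proof (rule Schur_test_finite[OF finBC bounded])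
    show "real (card {c\<in>C. M b c \<noteq> 0}) \<le> R" for b
    proof -
      have "{c\<in>C. M b c \<noteq> 0} = {c. M b c \<noteq> 0}" using outside by blast
      then show ?thesis using rows[of b] by simp
    qed
    show "real (card {b\<in>B. M b c \<noteq> 0}) \<le> K" for c
    proof -
      have "{b\<in>B. M b c \<noteq> 0} = {b. M b c \<noteq> 0}" using outside by blast
      then show ?thesis using cols[of c] by simp
    qed
  qed
  also have "\<dots> \<le> R * K * 1"
  proof (rule mult_left_mono)
    show "(\<Sum>b\<in>B. (cmod (z b))\<^sup>2) \<le> 1"
      using finite_sum_le_infsum[OF summable finBC(1)] unit by simp
    show "0 \<le> R * K"
      using rows cols order_trans of_nat_0_le_iff by (metis mult_nonneg_nonneg)
  qed
  finally show "x \<le> R * K" by simp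
qed

section \<open>Second differences of \<open>|x|\<^sup>\<alpha>\<close>\<close>

lemma powr_second_diff_ge:
  fixes \<alpha> x :: real
  assumes \<alpha>: "1 < \<alpha>" "\<alpha> < 2" and x: "2 \<le> x"
  shows "\<alpha> * (\<alpha> - 1) * (x + 1) powr (\<alpha> - 2) \<le> (x + 1) powr \<alpha> - 2 * x powr \<alpha> + (x - 1) powr \<alpha>"
proof -
  define \<psi> where "\<psi> y = (y + 1) powr \<alpha> - y powr \<alpha>" for y :: real
  have d\<psi>: "(\<psi> has_real_derivative \<alpha> * (y + 1) powr (\<alpha> - 1) - \<alpha> * y powr (\<alpha> - 1)) (at y)"
    if "x - 1 \<le> y" for y
  proof -
    have "0 < y" using that x by linarith
    then show ?thesis
      unfolding \<psi>_def
      by (auto intro!: derivative_eq_intros DERIV_chain2[OF has_real_derivative_powr])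
  qed
  obtain \<zeta> where \<zeta>: "x - 1 < \<zeta>" "\<zeta> < x"
    and mvt1: "\<psi> x - \<psi> (x - 1) = \<alpha> * ((\<zeta> + 1) powr (\<alpha> - 1) - \<zeta> powr (\<alpha> - 1))"
    using MVT2[of "x - 1" x \<psi> "\<lambda>y. \<alpha> * (y + 1) powr (\<alpha> - 1) - \<alpha> * y powr (\<alpha> - 1)"] d\<psi>
    by (auto simp: right_diff_distrib)
  have "((\<lambda>y. y powr (\<alpha> - 1)) has_real_derivative (\<alpha> - 1) * y powr (\<alpha> - 2)) (at y)"
    if "\<zeta> \<le> y" for y
    using has_real_derivative_powr[of y "\<alpha> - 1"] \<zeta> x that by (auto simp: diff_diff_add)
  then obtain \<eta> where \<eta>: "\<zeta> < \<eta>" "\<eta> < \<zeta> + 1"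
    and mvt2: "(\<zeta> + 1) powr (\<alpha> - 1) - \<zeta> powr (\<alpha> - 1) = (\<alpha> - 1) * \<eta> powr (\<alpha> - 2)"
    using MVT2[of \<zeta> "\<zeta> + 1" "\<lambda>y. y powr (\<alpha> - 1)" "\<lambda>y. (\<alpha> - 1) * y powr (\<alpha> - 2)"] by auto
  have "(x + 1) powr (\<alpha> - 2) \<le> \<eta> powr (\<alpha> - 2)"
    by (rule powr_mono2') (use \<alpha> \<zeta> \<eta> x in auto)
  then have "\<alpha> * (\<alpha> - 1) * (x + 1) powr (\<alpha> - 2) \<le> \<alpha> * ((\<alpha> - 1) * \<eta> powr (\<alpha> - 2))"
    using \<alpha> by (simp add: mult.assoc)
  also have "\<dots> = \<psi> x - \<psi> (x - 1)" using mvt1 mvt2 by simp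
  finally show ?thesis unfolding \<psi>_def by simp
qed

text \<open>\<open>\<alpha>(\<alpha> - 1)\<close> serves \<open>|j| \<ge> 2\<close> (mean value theorem); \<open>2\<^sup>\<alpha> - 2\<close> is the second difference at \<open>|j| = 1\<close>.\<close>

definition second_diff_const :: "real \<Rightarrow> real" where
  "second_diff_const \<alpha> = min (\<alpha> * (\<alpha> - 1)) (2 powr \<alpha> - 2)"

lemma second_diff_const_pos: "1 < \<alpha> \<Longrightarrow> 0 < second_diff_const \<alpha>"
  unfolding second_diff_const_def using powr_less_mono[of 1 \<alpha> 2] by auto

abbreviation pw :: "real \<Rightarrow> int \<Rightarrow> real" where
  "pw \<alpha> x \<equiv> real_of_int \<bar>x\<bar> powr \<alpha>"

lemma abs_powr_second_diff_ge:
  fixes \<alpha> :: real and j :: int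
  assumes \<alpha>: "1 < \<alpha>" "\<alpha> < 2"
  shows "second_diff_const \<alpha> * (real_of_int \<bar>j\<bar> + 1) powr (\<alpha> - 2)
    \<le> pw \<alpha> (j + 1) - 2 * pw \<alpha> j + pw \<alpha> (j - 1)"
proof -
  have nonneg: "second_diff_const \<alpha> * (real_of_int j + 1) powr (\<alpha> - 2)
    \<le> pw \<alpha> (j + 1) - 2 * pw \<alpha> j + pw \<alpha> (j - 1)" if "0 \<le> j" for j :: int
  proof -
    consider "j = 0" | "j = 1" | "2 \<le> j" using \<open>0 \<le> j\<close> by linarith
    then show ?thesis
    proof cases
      case 1
      have "\<alpha> * (\<alpha> - 1) < 2 * 1" by (rule mult_strict_mono) (use \<alpha> in auto)
      then show ?thesis using 1 by (simp add: second_diff_const_def)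
    next
      case 2
      have "2 powr (\<alpha> - 2) \<le> (1::real)" using powr_mono[of "\<alpha> - 2" 0 2] \<alpha> by auto
      then have "second_diff_const \<alpha> * 2 powr (\<alpha> - 2) \<le> second_diff_const \<alpha>"
        using second_diff_const_pos[OF \<alpha>(1)] by (simp add: mult_le_cancel_left1)
      then show ?thesis using 2 by (simp add: second_diff_const_def)
    next
      case 3
      then have "second_diff_const \<alpha> * (real_of_int j + 1) powr (\<alpha> - 2)
          \<le> \<alpha> * (\<alpha> - 1) * (real_of_int j + 1) powr (\<alpha> - 2)"
        by (intro mult_right_mono) (auto simp: second_diff_const_def)
      also have "\<dots> \<le> pw \<alpha> (j + 1) - 2 * pw \<alpha> j + pw \<alpha> (j - 1)"
        using powr_second_diff_ge[OF \<alpha>, of "real_of_int j"] 3 by simp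
      finally show ?thesis .
    qed
  qed
  show ?thesis
  proof (cases "0 \<le> j")
    case False
    have "\<bar>-j + 1\<bar> = \<bar>j - 1\<bar>" "\<bar>-j - 1\<bar> = \<bar>j + 1\<bar>" by auto
    then show ?thesis using nonneg[of "-j"] False by simp
  qed (use nonneg in simp)
qed

section \<open>Counting points near a level\<close>

lemma discrete_convex_le_chord:
  fixes f :: "nat \<Rightarrow> real"
  assumes convex: "\<And>t. 0 < t \<Longrightarrow> t < n \<Longrightarrow> 0 \<le> f (t + 1) - 2 * f t + f (t - 1)"
    and "p \<le> n"
  shows "real n * f p \<le> real (n - p) * f 0 + real p * f n"
proof -
  define D where "D t = f (Suc t) - f t" for t
  have D_mono: "D t \<le> D t'" if "t \<le> t'" "t' < n" for t t'
    using that
  proof (induction t' rule: dec_induct)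
    case (step t')
    then show ?case using convex[of "Suc t'"] by (simp add: D_def)
  qed simp
  have left: "f p - f 0 \<le> real p * D p" if "p < n"
  proof -
    have "f p - f 0 = (\<Sum>t<p. D t)"
      unfolding D_def by (simp add: sum_lessThan_telescope)
    also have "\<dots> \<le> (\<Sum>t<p. D p)" by (rule sum_mono) (use D_mono that in auto)
    finally show ?thesis by simp
  qed
  have "real (n - p) * D p = (\<Sum>t=p..<n. D p)" by simp
  also have "\<dots> \<le> (\<Sum>t=p..<n. D t)" by (rule sum_mono) (use D_mono in auto)
  also have "\<dots> = f n - f p" unfolding D_def using \<open>p \<le> n\<close> by (simp add: sum_Suc_diff')
  finally have right: "real (n - p) * D p \<le> f n - f p" .
  show ?thesis
  proof (cases "p < n")
    case True
    have "real (n - p) * (f p - f 0) \<le> real (n - p) * (real p * D p)"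
      using left[OF True] by (rule mult_left_mono) simp
    also have "\<dots> \<le> real p * (f n - f p)"
      using mult_left_mono[OF right, of "real p"] by (simp add: mult_ac)
    finally show ?thesis using \<open>p \<le> n\<close> by (simp add: of_nat_diff algebra_simps)
  qed (use \<open>p \<le> n\<close> in simp)
qed

lemma second_diff_ge_le_chord:
  fixes g :: "int \<Rightarrow> real"
  assumes second_diff: "\<And>t. i < t \<Longrightarrow> t < k \<Longrightarrow> \<kappa> \<le> g (t + 1) - 2 * g t + g (t - 1)"
    and "i \<le> j" "j \<le> k"
  shows "real_of_int (k - i) * g j \<le> real_of_int (k - j) * g i + real_of_int (j - i) * g k
    - \<kappa> / 2 * real_of_int (k - i) * real_of_int (j - i) * real_of_int (k - j)"
proof -
  define f where "f t = g (i + int t) - \<kappa> / 2 * (real t)\<^sup>2" for t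
  have "0 \<le> f (t + 1) - 2 * f t + f (t - 1)" if "0 < t" "t < nat (k - i)" for t
  proof -
    have "\<kappa> \<le> g (i + int t + 1) - 2 * g (i + int t) + g (i + int t - 1)"
      by (rule second_diff) (use that in auto)
    moreover have "int (t - 1) = int t - 1" "real (t - 1) = real t - 1" using that by auto
    ultimately show ?thesis unfolding f_def by (simp add: power2_eq_square algebra_simps)
  qed
  from discrete_convex_le_chord[of "nat (k - i)" f "nat (j - i)", OF this]
  have "real_of_int (k - i) * (g j - \<kappa> / 2 * (real_of_int (j - i))\<^sup>2)
      \<le> real_of_int (k - j) * g i + real_of_int (j - i) * (g k - \<kappa> / 2 * (real_of_int (k - i))\<^sup>2)"
    using assms(2,3) unfolding f_def by (simp add: of_nat_diff)
  moreover have "real_of_int (j - i) * (\<kappa> / 2 * (real_of_int (k - i))\<^sup>2)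
      - real_of_int (k - i) * (\<kappa> / 2 * (real_of_int (j - i))\<^sup>2)
    = \<kappa> / 2 * real_of_int (k - i) * real_of_int (j - i) * real_of_int (k - j)"
    unfolding of_int_diff power2_eq_square by (simp add: field_simps)
  ultimately show ?thesis unfolding right_diff_distrib by linarith
qed

lemma card_le_of_second_diff_ge:
  fixes g :: "int \<Rightarrow> real" and A :: "int set"
  assumes "finite A" "0 < \<kappa>" "0 \<le> C0"
    and near: "\<And>j. j \<in> A \<Longrightarrow> \<bar>g j - a\<bar> \<le> C0"
    and second_diff: "\<And>t x y. x \<in> A \<Longrightarrow> y \<in> A \<Longrightarrow> x < t \<Longrightarrow> t < y \<Longrightarrow>
      \<kappa> \<le> g (t + 1) - 2 * g t + g (t - 1)"
  shows "real (card A) \<le> 2 * sqrt (4 * C0 / \<kappa>) + 2"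
proof (cases "A = {}")
  case False
  define i where "i = Min A"
  define k where "k = Max A"
  define T where "T = 4 * C0 / \<kappa>"
  have "0 \<le> T" using assms unfolding T_def by simp
  have iA: "i \<in> A" and kA: "k \<in> A" unfolding i_def k_def using assms(1) False by auto
  have between: "i \<le> j" "j \<le> k" if "j \<in> A" for j unfolding i_def k_def using assms(1) that by auto
  \<comment> \<open>the chord of \<open>g\<close> over \<open>[i, k]\<close> lies \<open>\<kappa>/2 (j - i)(k - j)\<close> above \<open>g j\<close>, yet within \<open>2 C0\<close> of it\<close>
  have product: "real_of_int (j - i) * real_of_int (k - j) \<le> T" if jA: "j \<in> A" for j
  proof -
    define p q where "p = real_of_int (j - i)" and "q = real_of_int (k - j)"
    have pq: "0 \<le> p" "0 \<le> q" "real_of_int (k - i) = p + q"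
      using between[OF jA] unfolding p_def q_def by auto
    have chord: "(p + q) * g j \<le> q * g i + p * g k - \<kappa> / 2 * (p + q) * p * q"
      using second_diff_ge_le_chord[of i k \<kappa> g j] second_diff[OF iA kA] between[OF jA]
      unfolding p_def q_def by simp
    have "(p + q) * (a - C0) \<le> (p + q) * g j" "q * g i \<le> q * (a + C0)" "p * g k \<le> p * (a + C0)"
      using near[OF jA] near[OF iA] near[OF kA] pq by (auto intro: mult_left_mono)
    with chord have "(p + q) * (a - C0) \<le> q * (a + C0) + p * (a + C0) - \<kappa> / 2 * (p + q) * p * q"
      by linarith
    then have "(p + q) * (\<kappa> / 2 * (p * q)) \<le> (p + q) * (2 * C0)"
      by (simp add: algebra_simps)
    then have "p = 0 \<or> \<kappa> / 2 * (p * q) \<le> 2 * C0"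
      using pq mult_le_cancel_left_pos[of "p + q"] by (cases "p + q = 0") auto
    then show ?thesis using \<open>0 \<le> T\<close> assms(2) unfolding T_def p_def[symmetric] q_def[symmetric]
      by (auto simp: field_simps)
  qed
  define r where "r = nat \<lfloor>sqrt T\<rfloor>"
  have "real r = of_int \<lfloor>sqrt T\<rfloor>" unfolding r_def using \<open>0 \<le> T\<close> by simp
  then have r: "real r \<le> sqrt T" "sqrt T < real r + 1" by linarith+
  have "A \<subseteq> {i..i + int r} \<union> {k - int r..k}"
  proof
    fix j assume jA: "j \<in> A"
    show "j \<in> {i..i + int r} \<union> {k - int r..k}"
    proof (rule ccontr)
      assume "j \<notin> {i..i + int r} \<union> {k - int r..k}"
      then have "real r + 1 \<le> real_of_int (j - i)" "real r + 1 \<le> real_of_int (k - j)"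
        using between[OF jA] by auto
      then have "(real r + 1) * (real r + 1) \<le> real_of_int (j - i) * real_of_int (k - j)"
        by (intro mult_mono) auto
      moreover have "sqrt T * sqrt T < (real r + 1) * (real r + 1)"
        by (rule mult_strict_mono) (use r \<open>0 \<le> T\<close> in auto)
      ultimately show False using product[OF jA] \<open>0 \<le> T\<close> by simp
    qed
  qed
  then have "card A \<le> card ({i..i + int r} \<union> {k - int r..k})" by (intro card_mono) auto
  also have "\<dots> \<le> 2 * (r + 1)" using card_Un_le[of "{i..i + int r}" "{k - int r..k}"] by simp
  finally have "real (card A) \<le> real (2 * (r + 1))" by (simp only: of_nat_le_iff)
  then show ?thesis using r(1) unfolding T_def by simp
qed (use assms in simp)

lemma unit_increasing_diff_ge:
  fixes \<phi> :: "int \<Rightarrow> real"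
  assumes increasing: "\<And>t. c < t \<Longrightarrow> \<phi> t + 1 \<le> \<phi> (t + 1)" and "c < i" "i \<le> t"
  shows "\<phi> i + real_of_int (t - i) \<le> \<phi> t"
  using \<open>i \<le> t\<close>
proof (induction t rule: int_ge_induct)
  case (step t)
  then show ?case using increasing[of t] \<open>c < i\<close> by simp
qed simp

lemma
  fixes \<phi> :: "int \<Rightarrow> real"
  assumes increasing: "\<And>t. c < t \<Longrightarrow> \<phi> t + 1 \<le> \<phi> (t + 1)" and "0 \<le> C0"
  shows finite_near_level_increasing: "finite {t. c < t \<and> \<bar>\<phi> t - a\<bar> \<le> C0}"
    and card_near_level_increasing: "real (card {t. c < t \<and> \<bar>\<phi> t - a\<bar> \<le> C0}) \<le> 4 * C0 + 1"
proof -
  define A where "A = {t. c < t \<and> \<bar>\<phi> t - a\<bar> \<le> C0}"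
  have "finite A \<and> real (card A) \<le> 4 * C0 + 1"
  proof (cases "A = {}")
    case False
    then obtain i where "i \<in> A" by blast
    define r where "r = nat \<lfloor>2 * C0\<rfloor>"
    have close: "t' - t \<le> int r" if "t \<in> A" "t' \<in> A" "t \<le> t'" for t t'
      using unit_increasing_diff_ge[where \<phi>=\<phi> and c=c, OF increasing, of t t'] that \<open>0 \<le> C0\<close>
      unfolding A_def r_def by (auto, linarith)
    have sub: "A \<subseteq> {i - int r..i + int r}"
      using close[OF \<open>i \<in> A\<close>] close[OF _ \<open>i \<in> A\<close>] by fastforce
    then have "card A \<le> 2 * r + 1" using card_mono[OF _ sub] by simp
    moreover have "real r \<le> 2 * C0" unfolding r_def using \<open>0 \<le> C0\<close> by linarith
    ultimately show ?thesis using finite_subset[OF sub] by simp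
  qed (use \<open>0 \<le> C0\<close> in simp)
  then show "finite {t. c < t \<and> \<bar>\<phi> t - a\<bar> \<le> C0}"
    and "real (card {t. c < t \<and> \<bar>\<phi> t - a\<bar> \<le> C0}) \<le> 4 * C0 + 1"
    unfolding A_def by auto
qed

lemma abs_powr_succ_ge:
  fixes \<alpha> :: real and t :: int
  assumes "1 \<le> \<alpha>" "1 \<le> t"
  shows "pw \<alpha> t + 1 \<le> pw \<alpha> (t + 1)"
proof -
  have t: "1 \<le> real_of_int t" using assms by simp
  have "real_of_int t powr \<alpha> + 1 \<le> real_of_int t powr \<alpha> + real_of_int t powr (\<alpha> - 1)"
    using ge_one_powr_ge_zero[OF t, of "\<alpha> - 1"] assms by simp
  also have "\<dots> = (real_of_int t + 1) * real_of_int t powr (\<alpha> - 1)"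
    using t by (simp add: distrib_right powr_mult_base)
  also have "\<dots> \<le> (real_of_int t + 1) * (real_of_int t + 1) powr (\<alpha> - 1)"
    by (intro mult_left_mono powr_mono2) (use assms t in auto)
  also have "\<dots> = (real_of_int t + 1) powr \<alpha>"
    using t by (simp add: powr_mult_base)
  finally show ?thesis using assms by simp
qed

definition far_k2_set :: "real \<Rightarrow> real \<Rightarrow> int \<Rightarrow> real \<Rightarrow> int set" where
  "far_k2_set \<alpha> C0 s a = {k2. \<bar>s\<bar> < \<bar>k2\<bar> \<and> \<bar>pw \<alpha> (s - k2) + pw \<alpha> k2 - a\<bar> \<le> C0}"

lemma
  assumes "1 \<le> \<alpha>" "0 \<le> C0"
  shows finite_far_k2_set: "finite (far_k2_set \<alpha> C0 s a)"
    and card_far_k2_set_le: "real (card (far_k2_set \<alpha> C0 s a)) \<le> 8 * C0 + 2"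
proof -
  define P where "P s = {t. \<bar>s\<bar> < t \<and> \<bar>(pw \<alpha> (s - t) + pw \<alpha> t) - a\<bar> \<le> C0}" for s
  have "finite (P s) \<and> real (card (P s)) \<le> 4 * C0 + 1" for s
  proof -
    have "pw \<alpha> (s - t) + pw \<alpha> t + 1 \<le> pw \<alpha> (s - (t + 1)) + pw \<alpha> (t + 1)" if "\<bar>s\<bar> < t" for t
    proof -
      have "pw \<alpha> (s - t) \<le> pw \<alpha> (s - (t + 1))"
        by (rule powr_mono2) (use that assms in auto)
      moreover have "1 \<le> t" using that by linarith
      ultimately show ?thesis using abs_powr_succ_ge[OF assms(1), of t] by linarith
    qed
    then show ?thesis
      unfolding P_def
      using finite_near_level_increasing[where \<phi>="\<lambda>t. pw \<alpha> (s - t) + pw \<alpha> t"]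
        card_near_level_increasing[where \<phi>="\<lambda>t. pw \<alpha> (s - t) + pw \<alpha> t"] assms(2)
      by blast
  qed
  moreover have "far_k2_set \<alpha> C0 s a \<subseteq> P s \<union> uminus ` P (-s)"
  proof
    fix k2 assume k2: "k2 \<in> far_k2_set \<alpha> C0 s a"
    show "k2 \<in> P s \<union> uminus ` P (-s)"
    proof (cases "0 < k2")
      case False
      have "\<bar>-s - (-k2)\<bar> = \<bar>s - k2\<bar>" by simp
      then have "-k2 \<in> P (-s)" using k2 False unfolding far_k2_set_def P_def by auto
      then show ?thesis by (intro UnI2 rev_image_eqI[of "-k2"]) auto
    qed (use k2 in \<open>auto simp: far_k2_set_def P_def\<close>)
  qed
  ultimately have "finite (far_k2_set \<alpha> C0 s a)"
    and "card (far_k2_set \<alpha> C0 s a) \<le> card (P s) + card (P (-s))"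
    using card_mono[of "P s \<union> uminus ` P (-s)" "far_k2_set \<alpha> C0 s a"]
      card_Un_le[of "P s" "uminus ` P (-s)"] card_image_le[of "P (-s)" uminus]
    by (auto intro: finite_subset)
  moreover note \<open>\<And>s. finite (P s) \<and> real (card (P s)) \<le> 4 * C0 + 1\<close>
  ultimately show "finite (far_k2_set \<alpha> C0 s a)"
    and "real (card (far_k2_set \<alpha> C0 s a)) \<le> 8 * C0 + 2"
    by (smt (verit, best) of_nat_add of_nat_mono)+
qed

definition ibox :: "real \<Rightarrow> int set" where
  "ibox R = {k. \<bar>real_of_int k\<bar> \<le> R}"

lemma ibox_subset_atLeastAtMost: "ibox R \<subseteq> {-\<lfloor>R\<rfloor>..\<lfloor>R\<rfloor>}"
  unfolding ibox_def by (auto, linarith+)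

lemma finite_ibox: "finite (ibox R)"
  using finite_subset[OF ibox_subset_atLeastAtMost] by simp

lemma card_ibox_le:
  assumes "1 \<le> R"
  shows "real (card (ibox R)) \<le> 3 * R"
proof -
  have "card (ibox R) \<le> nat (2 * \<lfloor>R\<rfloor> + 1)"
    using card_mono[OF _ ibox_subset_atLeastAtMost] by simp
  then have "real (card (ibox R)) \<le> 2 * real_of_int \<lfloor>R\<rfloor> + 1"
    using assms by linarith
  then show ?thesis using assms by linarith
qed

lemma powr_sum_second_diff_ge:
  fixes \<alpha> R :: real and s t :: int
  assumes \<alpha>: "1 < \<alpha>" "\<alpha> < 2" and t: "\<bar>real_of_int t\<bar> \<le> R"
  defines "g j \<equiv> pw \<alpha> j + pw \<alpha> (s - j)"
  shows "second_diff_const \<alpha> * (R + 1) powr (\<alpha> - 2) \<le> g (t + 1) - 2 * g t + g (t - 1)"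
proof -
  have c: "0 < second_diff_const \<alpha>" using second_diff_const_pos \<alpha> by simp
  have "(R + 1) powr (\<alpha> - 2) \<le> (real_of_int \<bar>t\<bar> + 1) powr (\<alpha> - 2)"
    by (rule powr_mono2') (use \<alpha> t in auto)
  then have "second_diff_const \<alpha> * (R + 1) powr (\<alpha> - 2)
      \<le> pw \<alpha> (t + 1) - 2 * pw \<alpha> t + pw \<alpha> (t - 1)"
    using abs_powr_second_diff_ge[OF \<alpha>, of t] c by (smt (verit) mult_left_mono)
  moreover have "0 \<le> pw \<alpha> (s - t + 1) - 2 * pw \<alpha> (s - t) + pw \<alpha> (s - t - 1)"
    using abs_powr_second_diff_ge[OF \<alpha>, of "s - t"] c
    by (smt (verit) mult_nonneg_nonneg powr_ge_zero)
  moreover have "s - (t + 1) = s - t - 1" "s - (t - 1) = s - t + 1" by simp_all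
  ultimately show ?thesis unfolding g_def by (simp only:) argo
qed

lemma card_near_powr_sum_le:
  fixes \<alpha> C0 R a :: real and s :: int
  assumes \<alpha>: "1 < \<alpha>" "\<alpha> < 2" and "0 \<le> C0" "1 \<le> R"
  shows "real (card {j \<in> ibox R. \<bar>pw \<alpha> j + pw \<alpha> (s - j) - a\<bar> \<le> C0})
    \<le> (4 * sqrt (4 * C0 / second_diff_const \<alpha>) + 2) * R powr (1 - \<alpha> / 2)"
proof -
  define c where "c = second_diff_const \<alpha>"
  define e where "e = 1 - \<alpha> / 2"
  have "0 < c" "0 < e" "e \<le> 1" unfolding c_def e_def using second_diff_const_pos \<alpha> by auto
  have "real (card {j \<in> ibox R. \<bar>pw \<alpha> j + pw \<alpha> (s - j) - a\<bar> \<le> C0})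
      \<le> 2 * sqrt (4 * C0 / (c * (R + 1) powr (\<alpha> - 2))) + 2"
  proof (rule card_le_of_second_diff_ge)
    fix t x y
    assume "x \<in> {j \<in> ibox R. \<bar>pw \<alpha> j + pw \<alpha> (s - j) - a\<bar> \<le> C0}"
      and "y \<in> {j \<in> ibox R. \<bar>pw \<alpha> j + pw \<alpha> (s - j) - a\<bar> \<le> C0}" and "x < t" "t < y"
    moreover have "real_of_int x < real_of_int t" "real_of_int t < real_of_int y"
      using \<open>x < t\<close> \<open>t < y\<close> by simp_all
    ultimately have "\<bar>real_of_int t\<bar> \<le> R" unfolding ibox_def abs_le_iff by auto
    then show "c * (R + 1) powr (\<alpha> - 2) \<le> pw \<alpha> (t + 1) + pw \<alpha> (s - (t + 1))
        - 2 * (pw \<alpha> t + pw \<alpha> (s - t)) + (pw \<alpha> (t - 1) + pw \<alpha> (s - (t - 1)))"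
      unfolding c_def by (rule powr_sum_second_diff_ge[OF \<alpha>])
  qed (use \<open>0 < c\<close> \<open>0 \<le> C0\<close> \<open>1 \<le> R\<close> finite_ibox in auto)
  also have "sqrt (4 * C0 / (c * (R + 1) powr (\<alpha> - 2))) = sqrt (4 * C0 / c) * (R + 1) powr e"
  proof -
    have "(R + 1) powr (2 * e) = inverse ((R + 1) powr (\<alpha> - 2))"
      using powr_minus[of "R + 1" "\<alpha> - 2"] unfolding e_def by (simp add: algebra_simps)
    then have "4 * C0 / (c * (R + 1) powr (\<alpha> - 2)) = 4 * C0 / c * (R + 1) powr (2 * e)"
      by (simp add: field_simps)
    moreover have "sqrt ((R + 1) powr (2 * e)) = (R + 1) powr e"
      using powr_half_sqrt_powr[of "R + 1" "2 * e"] \<open>1 \<le> R\<close> by simp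
    ultimately show ?thesis by (simp only: real_sqrt_mult)
  qed
  finally have card: "real (card {j \<in> ibox R. \<bar>pw \<alpha> j + pw \<alpha> (s - j) - a\<bar> \<le> C0})
      \<le> 2 * (sqrt (4 * C0 / c) * (R + 1) powr e) + 2" .
  have "(R + 1) powr e \<le> (2 * R) powr e" by (rule powr_mono2) (use \<open>0 < e\<close> \<open>1 \<le> R\<close> in auto)
  also have "\<dots> \<le> 2 * R powr e"
    using powr_mono[of e 1 2] \<open>e \<le> 1\<close> \<open>1 \<le> R\<close> by (simp add: powr_mult)
  finally have "sqrt (4 * C0 / c) * (R + 1) powr e \<le> sqrt (4 * C0 / c) * (2 * R powr e)"
    using \<open>0 \<le> C0\<close> \<open>0 < c\<close> by (intro mult_left_mono) auto
  moreover have "1 \<le> R powr e" using ge_one_powr_ge_zero[of R e] \<open>1 \<le> R\<close> \<open>0 < e\<close> by simp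
  moreover have "(4 * sqrt (4 * C0 / c) + 2) * R powr e
      = 2 * (sqrt (4 * C0 / c) * (2 * R powr e)) + 2 * R powr e"
    by (simp add: algebra_simps)
  ultimately show ?thesis using card unfolding c_def e_def by linarith
qed

section \<open>The support of the cut tensor\<close>

definition Tsupp :: "real \<Rightarrow> real \<Rightarrow> real \<Rightarrow> real \<Rightarrow> real \<Rightarrow> real \<Rightarrow> real \<Rightarrow> (int \<times> int \<times> int \<times> int) set"
  where "Tsupp \<alpha> C0 N N1 N2 N3 m = {(k, k1, k2, k3). Tcut \<alpha> C0 N N1 N2 N3 m k k1 k2 k3 \<noteq> 0}"

lemma Tcut_01: "Tcut \<alpha> C0 N N1 N2 N3 m k k1 k2 k3 = 0 \<or> Tcut \<alpha> C0 N N1 N2 N3 m k k1 k2 k3 = 1"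
  by (simp add: Tcut_def Tb_def indicator_def)

lemma Tcut_nonzero_iff:
  "Tcut \<alpha> C0 N N1 N2 N3 m k k1 k2 k3 \<noteq> 0 \<longleftrightarrow>
    (k, k1, k2, k3) \<in> Sset \<alpha> C0 N N1 N2 N3 m \<and> \<bar>k1 + k3\<bar> < \<bar>k2\<bar>"
  by (simp add: Tcut_def Tb_def indicator_def)

lemma abs_Tcut_le: "\<bar>Tcut \<alpha> C0 N N1 N2 N3 m k k1 k2 k3\<bar> \<le> 1"
  using Tcut_01[of \<alpha> C0 N N1 N2 N3 m k k1 k2 k3] by auto

lemma Tcut_nonzeroD:
  assumes "Tcut \<alpha> C0 N N1 N2 N3 m k k1 k2 k3 \<noteq> 0"
  shows "k = k1 - k2 + k3" "k1 \<in> ibox N1" "k3 \<in> ibox N3"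
    and "\<bar>pw \<alpha> k1 + pw \<alpha> k3 - (pw \<alpha> k2 + pw \<alpha> k + m)\<bar> \<le> C0"
    and "k2 \<in> far_k2_set \<alpha> C0 (k1 + k3) (pw \<alpha> k1 + pw \<alpha> k3 - m)"
proof -
  have S: "(k, k1, k2, k3) \<in> Sset \<alpha> C0 N N1 N2 N3 m" and cut: "\<bar>k1 + k3\<bar> < \<bar>k2\<bar>"
    using assms by (simp_all add: Tcut_nonzero_iff)
  then show k: "k = k1 - k2 + k3" "k1 \<in> ibox N1" "k3 \<in> ibox N3"
    by (auto simp: Sset_def ibox_def)
  have "\<bar>pw \<alpha> k1 - pw \<alpha> k2 + pw \<alpha> k3 - pw \<alpha> k - m\<bar> \<le> C0"
    using S unfolding Sset_def by blast
  moreover have "pw \<alpha> k1 + pw \<alpha> k3 - (pw \<alpha> k2 + pw \<alpha> k + m) = pw \<alpha> k1 - pw \<alpha> k2 + pw \<alpha> k3 - pw \<alpha> k - m"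
    by simp
  ultimately show res: "\<bar>pw \<alpha> k1 + pw \<alpha> k3 - (pw \<alpha> k2 + pw \<alpha> k + m)\<bar> \<le> C0"
    by (simp only:)
  have "k1 + k3 - k2 = k" using k(1) by simp
  moreover have "\<bar>pw \<alpha> k + pw \<alpha> k2 - (pw \<alpha> k1 + pw \<alpha> k3 - m)\<bar> \<le> C0"
    using res by (simp add: abs_minus_commute algebra_simps)
  ultimately show "k2 \<in> far_k2_set \<alpha> C0 (k1 + k3) (pw \<alpha> k1 + pw \<alpha> k3 - m)"
    using cut unfolding far_k2_set_def by (simp only: mem_Collect_eq simp_thms)
qed

lemma finite_Tsupp: "finite (Tsupp \<alpha> C0 N N1 N2 N3 m)"
proof (rule finite_subset)
  show "Tsupp \<alpha> C0 N N1 N2 N3 m \<subseteq> ibox N \<times> ibox N1 \<times> ibox N2 \<times> ibox N3"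
    by (auto simp: Tsupp_def Tcut_nonzero_iff Sset_def ibox_def)
qed (simp add: finite_ibox)

lemma card_Tsupp_over_le:
  assumes "1 \<le> \<alpha>" "0 \<le> C0" "finite P"
  shows "real (card {(k, k1, k2, k3) \<in> Tsupp \<alpha> C0 N N1 N2 N3 m. (k1, k3) \<in> P})
    \<le> real (card P) * (8 * C0 + 2)"
proof -
  define F where "F = (\<lambda>(k1, k3). far_k2_set \<alpha> C0 (k1 + k3) (pw \<alpha> k1 + pw \<alpha> k3 - m))"
  have "{(k, k1, k2, k3) \<in> Tsupp \<alpha> C0 N N1 N2 N3 m. (k1, k3) \<in> P}
      \<subseteq> (\<lambda>((k1, k3), k2). (k1 - k2 + k3, k1, k2, k3)) ` Sigma P F"
  proof (clarify)
    fix k k1 k2 k3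
    assume "(k, k1, k2, k3) \<in> Tsupp \<alpha> C0 N N1 N2 N3 m" "(k1, k3) \<in> P"
    then show "(k, k1, k2, k3) \<in> (\<lambda>((k1, k3), k2). (k1 - k2 + k3, k1, k2, k3)) ` Sigma P F"
      using Tcut_nonzeroD(1,5)[of \<alpha> C0 N N1 N2 N3 m k k1 k2 k3] unfolding Tsupp_def F_def
      by (intro rev_image_eqI[of "((k1, k3), k2)"]) auto
  qed
  then have "card {(k, k1, k2, k3) \<in> Tsupp \<alpha> C0 N N1 N2 N3 m. (k1, k3) \<in> P} \<le> card (Sigma P F)"
    by (rule surj_card_le[rotated]) (use assms finite_far_k2_set in \<open>auto simp: F_def\<close>)
  also have "card (Sigma P F) = (\<Sum>p\<in>P. card (F p))"
    using assms finite_far_k2_set by (simp add: F_def split_def)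
  also have "\<dots> \<le> card P * (8 * C0 + 2)"
    using sum_bounded_above[of P "\<lambda>p. real (card (F p))" "8 * C0 + 2"]
      card_far_k2_set_le[OF assms(1,2)] by (simp add: F_def split_def)
  finally show ?thesis by simp
qed

lemma tnorm2_Tcut_le:
  assumes "1 \<le> \<alpha>" "0 \<le> C0" "1 \<le> N1" "1 \<le> N3"
  shows "tnorm2 (\<lambda>(k, k1, k2, k3). Tcut \<alpha> C0 N N1 N2 N3 m k k1 k2 k3) \<le> 9 * (8 * C0 + 2) * N1 * N3"
proof -
  have supp: "{x. (\<lambda>(k, k1, k2, k3). Tcut \<alpha> C0 N N1 N2 N3 m k k1 k2 k3) x \<noteq> 0} = Tsupp \<alpha> C0 N N1 N2 N3 m"
    by (auto simp: Tsupp_def)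
  have "tnorm2 (\<lambda>(k, k1, k2, k3). Tcut \<alpha> C0 N N1 N2 N3 m k k1 k2 k3) = card (Tsupp \<alpha> C0 N N1 N2 N3 m)"
    unfolding supp[symmetric]
    by (rule tnorm2_eq_card_support) (auto simp: supp finite_Tsupp Tcut_01 split: prod.splits)
  also have "Tsupp \<alpha> C0 N N1 N2 N3 m
      = {(k, k1, k2, k3) \<in> Tsupp \<alpha> C0 N N1 N2 N3 m. (k1, k3) \<in> ibox N1 \<times> ibox N3}"
    using Tcut_nonzeroD(2,3) by (auto simp: Tsupp_def)
  also have "real (card \<dots>) \<le> real (card (ibox N1)) * real (card (ibox N3)) * (8 * C0 + 2)"
    using card_Tsupp_over_le[OF assms(1,2), of "ibox N1 \<times> ibox N3" N N1 N2 N3 m]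
    by (simp add: finite_ibox card_cartesian_product)
  also have "\<dots> \<le> (3 * N1) * (3 * N3) * (8 * C0 + 2)"
    using card_ibox_le assms by (intro mult_right_mono mult_mono) auto
  finally show ?thesis by (simp add: mult_ac)
qed

lemma opnorm2_Tcut_k1_le:
  assumes "1 \<le> \<alpha>" "0 \<le> C0" "1 \<le> N3"
  shows "opnorm2 (\<lambda>k1 (k, k2, k3). Tcut \<alpha> C0 N N1 N2 N3 m k k1 k2 k3) \<le> 3 * (8 * C0 + 2) * N3"
proof -
  have "opnorm2 (\<lambda>k1 (k, k2, k3). Tcut \<alpha> C0 N N1 N2 N3 m k k1 k2 k3) \<le> (3 * N3 * (8 * C0 + 2)) * 1"
  proof (rule opnorm2_le_Schur)
    have "{(k1, c). (\<lambda>(k, k2, k3). Tcut \<alpha> C0 N N1 N2 N3 m k k1 k2 k3) c \<noteq> 0}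
        \<subseteq> (\<lambda>(k, k1, k2, k3). (k1, k, k2, k3)) ` Tsupp \<alpha> C0 N N1 N2 N3 m"
      by (force simp: Tsupp_def)
    then show "finite {(k1, c). (\<lambda>(k, k2, k3). Tcut \<alpha> C0 N N1 N2 N3 m k k1 k2 k3) c \<noteq> 0}"
      using finite_Tsupp finite_subset by blast
  next
    fix k1
    have "{c. (\<lambda>(k, k2, k3). Tcut \<alpha> C0 N N1 N2 N3 m k k1 k2 k3) c \<noteq> 0}
        \<subseteq> (\<lambda>(k, k1, k2, k3). (k, k2, k3)) `
          {(k, k1', k2, k3) \<in> Tsupp \<alpha> C0 N N1 N2 N3 m. (k1', k3) \<in> {k1} \<times> ibox N3}"
      using Tcut_nonzeroD(3) by (force simp: Tsupp_def)
    then have "card {c. (\<lambda>(k, k2, k3). Tcut \<alpha> C0 N N1 N2 N3 m k k1 k2 k3) c \<noteq> 0}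
        \<le> card {(k, k1', k2, k3) \<in> Tsupp \<alpha> C0 N N1 N2 N3 m. (k1', k3) \<in> {k1} \<times> ibox N3}"
      by (rule surj_card_le[rotated]) (auto intro: rev_finite_subset[OF finite_Tsupp])
    also have "real \<dots> \<le> real (card (ibox N3)) * (8 * C0 + 2)"
      using card_Tsupp_over_le[OF assms(1,2), of "{k1} \<times> ibox N3" N N1 N2 N3 m]
      by (simp add: finite_ibox card_cartesian_product)
    also have "\<dots> \<le> 3 * N3 * (8 * C0 + 2)"
      using card_ibox_le assms by (intro mult_right_mono) auto
    finally show "real (card {c. (\<lambda>(k, k2, k3). Tcut \<alpha> C0 N N1 N2 N3 m k k1 k2 k3) c \<noteq> 0})
        \<le> 3 * N3 * (8 * C0 + 2)" by simp
  next
    fix c :: "int \<times> int \<times> int"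
    obtain k k2 k3 where c: "c = (k, k2, k3)" by (cases c)
    have "{k1. Tcut \<alpha> C0 N N1 N2 N3 m k k1 k2 k3 \<noteq> 0} \<subseteq> {k + k2 - k3}"
      using Tcut_nonzeroD(1) by fastforce
    then show "real (card {k1. (\<lambda>(k, k2, k3). Tcut \<alpha> C0 N N1 N2 N3 m k k1 k2 k3) c \<noteq> 0}) \<le> 1"
      unfolding c using card_mono[of "{k + k2 - k3}"] by fastforce
  qed (auto simp: abs_Tcut_le split: prod.splits)
  then show ?thesis by (simp add: mult_ac)
qed

lemma opnorm2_reindex_cols:
  assumes "bij \<sigma>"
  shows "opnorm2 (\<lambda>b c. M b (\<sigma> c)) = opnorm2 M"
proof -
  have "(\<Sum>\<^sub>\<infinity>c. (cmod (\<Sum>\<^sub>\<infinity>b. complex_of_real (M b (\<sigma> c)) * z b))\<^sup>2)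
      = (\<Sum>\<^sub>\<infinity>c. (cmod (\<Sum>\<^sub>\<infinity>b. complex_of_real (M b c) * z b))\<^sup>2)" for z
    using infsum_reindex_bij_betw[of \<sigma> UNIV UNIV "\<lambda>c. (cmod (\<Sum>\<^sub>\<infinity>b. complex_of_real (M b c) * z b))\<^sup>2"]
      assms by simp
  then show ?thesis unfolding opnorm2_def by simp
qed

lemma Tcut_swap:
  "Tcut \<alpha> C0 N N1 N2 N3 m k k1 k2 k3 = Tcut \<alpha> C0 N N3 N2 N1 m k k3 k2 k1"
  by (auto simp: Tcut_def Tb_def Sset_def indicator_def algebra_simps)

lemma opnorm2_Tcut_k3_le:
  assumes "1 \<le> \<alpha>" "0 \<le> C0" "1 \<le> N1"
  shows "opnorm2 (\<lambda>k3 (k, k1, k2). Tcut \<alpha> C0 N N1 N2 N3 m k k1 k2 k3) \<le> 3 * (8 * C0 + 2) * N1"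
proof -
  have "bij (\<lambda>(k :: int, k1 :: int, k2 :: int). (k, k2, k1))"
    by (rule involuntory_imp_bij) auto
  then have "opnorm2 (\<lambda>k3 (k, k1, k2). Tcut \<alpha> C0 N N1 N2 N3 m k k1 k2 k3)
      = opnorm2 (\<lambda>k1 (k, k2, k3). Tcut \<alpha> C0 N N3 N2 N1 m k k1 k2 k3)"
    using opnorm2_reindex_cols[of "\<lambda>(k, k1, k2). (k, k2, k1)"
        "\<lambda>k3 (k, k2, k1). Tcut \<alpha> C0 N N3 N2 N1 m k k3 k2 k1"]
    by (simp add: Tcut_swap[of \<alpha> C0 N N1 N2 N3] case_prod_unfold)
  also have "\<dots> \<le> 3 * (8 * C0 + 2) * N1" by (rule opnorm2_Tcut_k1_le[OF assms])
  finally show ?thesis .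
qed

lemma opnorm2_Tcut_kk2_le:
  assumes \<alpha>: "1 < \<alpha>" "\<alpha> < 2" and "0 \<le> C0" "1 \<le> N1" "1 \<le> N3"
  shows "opnorm2 (\<lambda>(k, k2) (k1, k3). Tcut \<alpha> C0 N N1 N2 N3 m k k1 k2 k3)
    \<le> (4 * sqrt (4 * C0 / second_diff_const \<alpha>) + 2) * (8 * C0 + 2) * min N1 N3 powr (1 - \<alpha> / 2)"
proof -
  define K where "K = 4 * sqrt (4 * C0 / second_diff_const \<alpha>) + 2"
  have "opnorm2 (\<lambda>(k, k2) (k1, k3). Tcut \<alpha> C0 N N1 N2 N3 m k k1 k2 k3)
      \<le> (K * min N1 N3 powr (1 - \<alpha> / 2)) * (8 * C0 + 2)"
  proof (rule opnorm2_le_Schur)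
    have "{(b, c). (\<lambda>(k, k2) (k1, k3). Tcut \<alpha> C0 N N1 N2 N3 m k k1 k2 k3) b c \<noteq> 0}
        \<subseteq> (\<lambda>(k, k1, k2, k3). ((k, k2), (k1, k3))) ` Tsupp \<alpha> C0 N N1 N2 N3 m"
      by (force simp: Tsupp_def)
    then show "finite {(b, c). (\<lambda>(k, k2) (k1, k3). Tcut \<alpha> C0 N N1 N2 N3 m k k1 k2 k3) b c \<noteq> 0}"
      using finite_Tsupp finite_subset by blast
  next
    fix b :: "int \<times> int"
    obtain k k2 where b: "b = (k, k2)" by (cases b)
    define s a where "s = k + k2" and "a = pw \<alpha> k2 + pw \<alpha> k + m"
    define X where "X = {c. (\<lambda>(k1, k3). Tcut \<alpha> C0 N N1 N2 N3 m k k1 k2 k3) c \<noteq> 0}"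
    \<comment> \<open>a row is parametrised by either \<open>k1\<close> or \<open>k3\<close>, since \<open>k1 + k3 = s\<close> is fixed\<close>
    have row: "k3 = s - k1 \<and> k1 \<in> ibox N1 \<and> k3 \<in> ibox N3 \<and> \<bar>pw \<alpha> k1 + pw \<alpha> k3 - a\<bar> \<le> C0"
      if "(k1, k3) \<in> X" for k1 k3
      using that Tcut_nonzeroD[of \<alpha> C0 N N1 N2 N3 m k k1 k2 k3] unfolding X_def s_def a_def
      by (auto simp: ac_simps)
    have X1: "X \<subseteq> (\<lambda>j. (j, s - j)) ` {j \<in> ibox N1. \<bar>pw \<alpha> j + pw \<alpha> (s - j) - a\<bar> \<le> C0}"
    proof (clarify)
      fix k1 k3 assume "(k1, k3) \<in> X"
      note r = row[OF this]
      then show "(k1, k3) \<in> (\<lambda>j. (j, s - j)) ` {j \<in> ibox N1. \<bar>pw \<alpha> j + pw \<alpha> (s - j) - a\<bar> \<le> C0}"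
        by (intro rev_image_eqI[of k1]) auto
    qed
    have "card X \<le> card {j \<in> ibox N1. \<bar>pw \<alpha> j + pw \<alpha> (s - j) - a\<bar> \<le> C0}"
      by (rule surj_card_le[OF _ X1]) (simp add: finite_ibox)
    then have card1: "real (card X) \<le> K * N1 powr (1 - \<alpha> / 2)"
      using card_near_powr_sum_le[OF \<alpha> \<open>0 \<le> C0\<close> \<open>1 \<le> N1\<close>, of s a]
      unfolding K_def by (meson of_nat_le_iff order_trans)
    have X3: "X \<subseteq> (\<lambda>j. (s - j, j)) ` {j \<in> ibox N3. \<bar>pw \<alpha> j + pw \<alpha> (s - j) - a\<bar> \<le> C0}"
    proof (clarify)
      fix k1 k3 assume "(k1, k3) \<in> X"
      note r = row[OF this]
      then have "k1 = s - k3" by simp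
      with r show "(k1, k3) \<in> (\<lambda>j. (s - j, j)) ` {j \<in> ibox N3. \<bar>pw \<alpha> j + pw \<alpha> (s - j) - a\<bar> \<le> C0}"
        by (intro rev_image_eqI[of k3]) (auto simp: add.commute)
    qed
    have "card X \<le> card {j \<in> ibox N3. \<bar>pw \<alpha> j + pw \<alpha> (s - j) - a\<bar> \<le> C0}"
      by (rule surj_card_le[OF _ X3]) (simp add: finite_ibox)
    then have card3: "real (card X) \<le> K * N3 powr (1 - \<alpha> / 2)"
      using card_near_powr_sum_le[OF \<alpha> \<open>0 \<le> C0\<close> \<open>1 \<le> N3\<close>, of s a]
      unfolding K_def by (meson of_nat_le_iff order_trans)
    show "real (card {c. (\<lambda>(k, k2) (k1, k3). Tcut \<alpha> C0 N N1 N2 N3 m k k1 k2 k3) b c \<noteq> 0})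
        \<le> K * min N1 N3 powr (1 - \<alpha> / 2)"
      using card1 card3 unfolding b X_def by (simp add: min_def)
  next
    fix c :: "int \<times> int"
    obtain k1 k3 where c: "c = (k1, k3)" by (cases c)
    have "{(k, k2). Tcut \<alpha> C0 N N1 N2 N3 m k k1 k2 k3 \<noteq> 0}
        \<subseteq> (\<lambda>k2. (k1 + k3 - k2, k2)) ` far_k2_set \<alpha> C0 (k1 + k3) (pw \<alpha> k1 + pw \<alpha> k3 - m)"
    proof (clarify)
      fix k k2 assume "Tcut \<alpha> C0 N N1 N2 N3 m k k1 k2 k3 \<noteq> 0"
      from Tcut_nonzeroD(1,5)[OF this]
      show "(k, k2) \<in> (\<lambda>k2. (k1 + k3 - k2, k2)) ` far_k2_set \<alpha> C0 (k1 + k3) (pw \<alpha> k1 + pw \<alpha> k3 - m)"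
        by (intro rev_image_eqI[of k2]) auto
    qed
    then have "card {(k, k2). Tcut \<alpha> C0 N N1 N2 N3 m k k1 k2 k3 \<noteq> 0}
        \<le> card (far_k2_set \<alpha> C0 (k1 + k3) (pw \<alpha> k1 + pw \<alpha> k3 - m))"
      using finite_far_k2_set \<alpha> \<open>0 \<le> C0\<close> by (intro surj_card_le) auto
    moreover have "{b. (\<lambda>(k, k2) (k1, k3). Tcut \<alpha> C0 N N1 N2 N3 m k k1 k2 k3) b c \<noteq> 0}
        = {(k, k2). Tcut \<alpha> C0 N N1 N2 N3 m k k1 k2 k3 \<noteq> 0}"
      unfolding c by auto
    ultimately show "real (card {b. (\<lambda>(k, k2) (k1, k3). Tcut \<alpha> C0 N N1 N2 N3 m k k1 k2 k3) b c \<noteq> 0})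
        \<le> 8 * C0 + 2"
      using card_far_k2_set_le[of \<alpha> C0 "k1 + k3" "pw \<alpha> k1 + pw \<alpha> k3 - m"] \<alpha> \<open>0 \<le> C0\<close>
      by (simp add: order_trans[OF of_nat_mono])
  qed (auto simp: abs_Tcut_le split: prod.splits)
  then show ?thesis unfolding K_def by (simp add: mult_ac)
qed

theorem lemma2p15:
  fixes \<alpha> C0 :: real
  assumes "1 < \<alpha>" "\<alpha> < 2" "0 < C0"
  shows "\<exists>C>0. \<forall>N N1 N2 N3 m :: real.
    dyadic N \<and> dyadic N1 \<and> dyadic N2 \<and> dyadic N3 \<and>
    1 \<le> N1 \<and> N1 \<le> N \<and> 1 \<le> N2 \<and> N2 \<le> N \<and> 1 \<le> N3 \<and> N3 \<le> N \<longrightarrow>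
      tnorm2 (\<lambda>(k, k1, k2, k3). Tcut \<alpha> C0 N N1 N2 N3 m k k1 k2 k3) \<le> C * N1 * N3 \<and>
      opnorm2 (\<lambda>(k, k2) (k1, k3). Tcut \<alpha> C0 N N1 N2 N3 m k k1 k2 k3)
        \<le> C * min N1 N3 powr (1 - \<alpha> / 2) \<and>
      opnorm2 (\<lambda>k1 (k, k2, k3). Tcut \<alpha> C0 N N1 N2 N3 m k k1 k2 k3) \<le> C * N3 \<and>
      opnorm2 (\<lambda>k3 (k, k1, k2). Tcut \<alpha> C0 N N1 N2 N3 m k k1 k2 k3) \<le> C * N1"
proof -
  define B K where "B = 8 * C0 + 2" and "K = 4 * sqrt (4 * C0 / second_diff_const \<alpha>) + 2"
  have "0 < B" "2 \<le> K"
    using assms second_diff_const_pos[of \<alpha>] unfolding B_def K_def by auto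
  then have C: "0 < 9 * B * K" "9 * B \<le> 9 * B * K" "3 * B \<le> 9 * B * K" "K * B \<le> 9 * B * K"
    by auto
  have \<alpha>: "1 \<le> \<alpha>" "0 \<le> C0" using assms by auto
  show ?thesis
  proof (intro exI[of _ "9 * B * K"] conjI allI impI C(1))
    fix N N1 N2 N3 m :: real
    assume "dyadic N \<and> dyadic N1 \<and> dyadic N2 \<and> dyadic N3 \<and>
      1 \<le> N1 \<and> N1 \<le> N \<and> 1 \<le> N2 \<and> N2 \<le> N \<and> 1 \<le> N3 \<and> N3 \<le> N"
    then have N: "1 \<le> N1" "1 \<le> N3" by auto
    show "tnorm2 (\<lambda>(k, k1, k2, k3). Tcut \<alpha> C0 N N1 N2 N3 m k k1 k2 k3) \<le> 9 * B * K * N1 * N3"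
      by (rule order_trans[OF tnorm2_Tcut_le[OF \<alpha> N]])
        (use C N in \<open>auto simp: B_def intro!: mult_right_mono\<close>)
    show "opnorm2 (\<lambda>(k, k2) (k1, k3). Tcut \<alpha> C0 N N1 N2 N3 m k k1 k2 k3)
        \<le> 9 * B * K * min N1 N3 powr (1 - \<alpha> / 2)"
      by (rule order_trans[OF opnorm2_Tcut_kk2_le[OF assms(1,2) \<alpha>(2) N]])
        (use C in \<open>auto simp: B_def K_def intro!: mult_right_mono\<close>)
    show "opnorm2 (\<lambda>k1 (k, k2, k3). Tcut \<alpha> C0 N N1 N2 N3 m k k1 k2 k3) \<le> 9 * B * K * N3"
      by (rule order_trans[OF opnorm2_Tcut_k1_le[OF \<alpha> N(2)]])
        (use C N in \<open>auto simp: B_def intro!: mult_right_mono\<close>)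
    show "opnorm2 (\<lambda>k3 (k, k1, k2). Tcut \<alpha> C0 N N1 N2 N3 m k k1 k2 k3) \<le> 9 * B * K * N1"
      by (rule order_trans[OF opnorm2_Tcut_k3_le[OF \<alpha> N(1)]])
        (use C N in \<open>auto simp: B_def intro!: mult_right_mono\<close>)
  qed
qed

end
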